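(* Let $1\to A\to E\xrightarrow{\pi} G\to 1$ be an extension of groups, let $z\in A$ be a central element of $E$ with $z^2=1$, and let $\bar z:=\pi(z)$. Then there exists a dynamical cocycle $(\alpha,\beta)$ of the symmetric quandle $(\operatorname{Core}(G),\bar z)$ over the family of sets $S=\{S_x\}_{x\in G}$ with $S_x=A$ (the underlying set of $(\operatorname{Core}(A),z)$) for every $x$, such that $(\operatorname{Core}(E),z)$ is isomorphic as a symmetric quandle to $(\operatorname{Core}(G),\bar z)\times_{(\alpha,\beta)}(\operatorname{Core}(A),z)$.
   Context: For a group $H$, the core quandle $\operatorname{Core}(H)$ is the set $H$ with $x*y=yx^{-1}y$. If $c\in H$ is central with $c^2=1$, then $y\mapsto yc$ is a good involution on $\operatorname{Core}(H)$, and the resulting symmetric quandle is denoted $(\operatorname{Core}(H),c)$. Here a quandle is a set with binary operation $*$ such that each $x\mapsto x*y$ is bijective (inverse $x\mapsto x*^{-1}y$), $(x*y)*z=(x*z)*(y*z)$ and $x*x=x$; a good involution is $\rho$ with $\rho^2=\mathrm{id}$, $\rho(x*y)=\rho(x)*y$, $x*\rho(y)=x*^{-1}y$; symmetric quandle homomorphisms preserve $*$ and commute with involutions. A dynamical cocycle of a symmetric quandle $(X,\rho)$ over a family of sets $S=\{S_x\}$ consists of maps $\alpha_{x,y}:S_x\times S_y\to S_{x*y}$, $\beta_x:S_x\to S_{\rho(x)}$ such that for all $x,y,z$, $s\in S_x,t\in S_y,w\in S_z$ (with $\alpha_{x,y}(t)(s):=\alpha_{x,y}(s,t)$): (1) $\alpha_{x,y}(t)$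 is bijective $S_x\to S_{x*y}$; (2) $\alpha_{x*y,z}(\alpha_{x,y}(s,t),w)=\alpha_{x*z,y*z}(\alpha_{x,z}(s,w),\alpha_{y,z}(t,w))$; (3) $\alpha_{\rho(x),y}(\beta_x(s),t)=\beta_{x*y}(\alpha_{x,y}(s,t))$; (4) $\beta_{\rho(x)}\beta_x(s)=s$; (5) $\alpha_{x,\rho(y)}(\beta_y(t))(s)=(\alpha_{x*^{-1}y,y}(t))^{-1}(s)$; (6) $\alpha_{x,x}(s,s)=s$. The extension $X\times_{(\alpha,\beta)}S$ is the set $\{(x,s)\mid x\in X,s\in S_x\}$ with $(x,s)*(y,t)=(x*y,\alpha_{x,y}(s,t))$ and involution $(x,s)\mapsto(\rho(x),\beta_x(s))$. *)

theory Defs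
  imports "HOL-Algebra.Algebra"
begin

definition core_op :: "('a, 'b) monoid_scheme \<Rightarrow> 'a \<Rightarrow> 'a \<Rightarrow> 'a" where
  "core_op H x y = y \<otimes>\<^bsub>H\<^esub> inv\<^bsub>H\<^esub> x \<otimes>\<^bsub>H\<^esub> y"

definition qinv :: "'x set \<Rightarrow> ('x \<Rightarrow> 'x \<Rightarrow> 'x) \<Rightarrow> 'x \<Rightarrow> 'x \<Rightarrow> 'x" where
  "qinv Q mul x y = the_inv_into Q (\<lambda>w. mul w y) x"

text \<open>Dynamical cocycle (alpha, beta) of a symmetric quandle (Q, mul, rho)
  over the family of sets S; alpha x y s t = alpha_{x,y}(s,t).\<close>
definition dyn_cocycle ::
  "'x set \<Rightarrow> ('x \<Rightarrow> 'x \<Rightarrow> 'x) \<Rightarrow> ('x \<Rightarrow> 'x) \<Rightarrow> ('x \<Rightarrow> 's set)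
   \<Rightarrow> ('x \<Rightarrow> 'x \<Rightarrow> 's \<Rightarrow> 's \<Rightarrow> 's) \<Rightarrow> ('x \<Rightarrow> 's \<Rightarrow> 's) \<Rightarrow> bool" where
  "dyn_cocycle Q mul rho S \<alpha> \<beta> \<longleftrightarrow>
     (\<forall>x\<in>Q. \<forall>y\<in>Q. \<forall>s\<in>S x. \<forall>t\<in>S y. \<alpha> x y s t \<in> S (mul x y)) \<and>
     (\<forall>x\<in>Q. \<forall>s\<in>S x. \<beta> x s \<in> S (rho x)) \<and>
     (\<forall>x\<in>Q. \<forall>y\<in>Q. \<forall>t\<in>S y. bij_betw (\<lambda>s. \<alpha> x y s t) (S x) (S (mul x y))) \<and>
     (\<forall>x\<in>Q. \<forall>y\<in>Q. \<forall>z\<in>Q. \<forall>s\<in>S x. \<forall>t\<in>S y. \<forall>w\<in>S z.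
        \<alpha> (mul x y) z (\<alpha> x y s t) w = \<alpha> (mul x z) (mul y z) (\<alpha> x z s w) (\<alpha> y z t w)) \<and>
     (\<forall>x\<in>Q. \<forall>y\<in>Q. \<forall>s\<in>S x. \<forall>t\<in>S y.
        \<alpha> (rho x) y (\<beta> x s) t = \<beta> (mul x y) (\<alpha> x y s t)) \<and>
     (\<forall>x\<in>Q. \<forall>s\<in>S x. \<beta> (rho x) (\<beta> x s) = s) \<and>
     (\<forall>x\<in>Q. \<forall>y\<in>Q. \<forall>s\<in>S x. \<forall>t\<in>S y.
        \<alpha> x (rho y) s (\<beta> y t) =
        the_inv_into (S (qinv Q mul x y)) (\<lambda>u. \<alpha> (qinv Q mul x y) y u t) s) \<and>
     (\<forall>x\<in>Q. \<forall>s\<in>S x. \<alpha> x x s s = s)"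

text \<open>The extension Q \<times>_(alpha,beta) S: carrier Sigma Q S, operation and involution.\<close>
definition ext_op ::
  "('x \<Rightarrow> 'x \<Rightarrow> 'x) \<Rightarrow> ('x \<Rightarrow> 'x \<Rightarrow> 's \<Rightarrow> 's \<Rightarrow> 's) \<Rightarrow> 'x \<times> 's \<Rightarrow> 'x \<times> 's \<Rightarrow> 'x \<times> 's" where
  "ext_op mul \<alpha> p q = (mul (fst p) (fst q), \<alpha> (fst p) (fst q) (snd p) (snd q))"

definition ext_rho :: "('x \<Rightarrow> 'x) \<Rightarrow> ('x \<Rightarrow> 's \<Rightarrow> 's) \<Rightarrow> 'x \<times> 's \<Rightarrow> 'x \<times> 's" where
  "ext_rho rho \<beta> p = (rho (fst p), \<beta> (fst p) (snd p))"

definition sq_iso ::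
  "'x set \<Rightarrow> ('x \<Rightarrow> 'x \<Rightarrow> 'x) \<Rightarrow> ('x \<Rightarrow> 'x) \<Rightarrow>
   'y set \<Rightarrow> ('y \<Rightarrow> 'y \<Rightarrow> 'y) \<Rightarrow> ('y \<Rightarrow> 'y) \<Rightarrow> ('x \<Rightarrow> 'y) \<Rightarrow> bool" where
  "sq_iso Q mul1 rho1 R mul2 rho2 f \<longleftrightarrow>
     bij_betw f Q R \<and>
     (\<forall>a\<in>Q. \<forall>b\<in>Q. f (mul1 a b) = mul2 (f a) (f b)) \<and>
     (\<forall>a\<in>Q. f (rho1 a) = rho2 (f a))"

end

theory Submission
  imports Defs
begin

text \<open>A section of \<open>\<pi>\<close> identifies \<open>E\<close> with \<open>G \<times> A\<close> as sets, fibrewise over \<open>G\<close>.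
  Transporting the core quandle of \<open>E\<close>, with the good involution \<open>y \<mapsto> y \<iota>(z)\<close>, along this
  bijection yields a symmetric quandle on \<open>G \<times> A\<close>. As \<open>\<pi>\<close> is a homomorphism of core quandles
  commuting with the involutions, this structure has the extension form
  \<open>(x, s) * (y, t) = (x * y, \<alpha>(x, y, s, t))\<close>, \<open>\<rho>(x, s) = (\<rho>(x), \<beta>(x, s))\<close> over
  \<open>(Core(G), \<pi>(\<iota>(z)))\<close>. Conversely, for any structure of this form over a quandle, the symmetric
  quandle axioms read in the second coordinate are exactly the dynamical cocycle conditions.\<close>

locale quandle =
  fixes Q :: "'q set" and mul :: "'q \<Rightarrow> 'q \<Rightarrow> 'q"
  assumes mul_closed: "x \<in> Q \<Longrightarrow> y \<in> Q \<Longrightarrow> mul x y \<in> Q"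
    and bij_right_mul: "y \<in> Q \<Longrightarrow> bij_betw (\<lambda>x. mul x y) Q Q"
    and self_distrib:
      "x \<in> Q \<Longrightarrow> y \<in> Q \<Longrightarrow> z \<in> Q \<Longrightarrow> mul (mul x y) z = mul (mul x z) (mul y z)"
    and mul_idem: "x \<in> Q \<Longrightarrow> mul x x = x"
begin

lemma qinv_closed: "x \<in> Q \<Longrightarrow> y \<in> Q \<Longrightarrow> qinv Q mul x y \<in> Q"
  unfolding qinv_def using bij_right_mul
  by (metis bij_betw_def order_refl the_inv_into_into)

lemma mul_qinv: "x \<in> Q \<Longrightarrow> y \<in> Q \<Longrightarrow> mul (qinv Q mul x y) y = x"
  unfolding qinv_def by (rule f_the_inv_into_f_bij_betw[OF bij_right_mul])

lemma right_cancel: "x \<in> Q \<Longrightarrow> x' \<in> Q \<Longrightarrow> y \<in> Q \<Longrightarrow> mul x y = mul x' y \<Longrightarrow> x = x'"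
  using bij_right_mul by (metis bij_betw_def inj_on_def)

lemma qinv_eqI: "w \<in> Q \<Longrightarrow> y \<in> Q \<Longrightarrow> mul w y = x \<Longrightarrow> qinv Q mul x y = w"
  unfolding qinv_def by (rule the_inv_into_f_eq) (use bij_right_mul bij_betw_def in auto)

end

locale symmetric_quandle = quandle +
  fixes rho :: "'q \<Rightarrow> 'q"
  assumes rho_closed: "x \<in> Q \<Longrightarrow> rho x \<in> Q"
    and rho_rho: "x \<in> Q \<Longrightarrow> rho (rho x) = x"
    and rho_mul: "x \<in> Q \<Longrightarrow> y \<in> Q \<Longrightarrow> rho (mul x y) = mul (rho x) y"
    and mul_rho: "x \<in> Q \<Longrightarrow> y \<in> Q \<Longrightarrow> mul x (rho y) = qinv Q mul x y"

lemma (in symmetric_quandle) sq_iso_image: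
  assumes iso: "sq_iso Q mul rho R mul' rho' f"
  shows "symmetric_quandle R mul' rho'"
proof -
  have f: "bij_betw f Q R"
    and hom: "\<And>a b. a \<in> Q \<Longrightarrow> b \<in> Q \<Longrightarrow> f (mul a b) = mul' (f a) (f b)"
    and rho_hom: "\<And>a. a \<in> Q \<Longrightarrow> f (rho a) = rho' (f a)"
    using iso unfolding sq_iso_def by auto
  have R: "R = f ` Q"
    using f by (simp add: bij_betw_def)
  have preimage: "\<exists>a\<in>Q. p = f a" if "p \<in> R" for p
    using that unfolding R by blast
  interpret R: quandle R mul'
  proof
    fix p q assume "p \<in> R" "q \<in> R"
    then obtain a b where "a \<in> Q" "b \<in> Q" "p = f a" "q = f b"
      using preimage by meson
    then show "mul' p q \<in> R"
      unfolding R by (simp add: hom[symmetric] mul_closed)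
  next
    fix q assume "q \<in> R"
    then obtain b where b: "b \<in> Q" "q = f b"
      using preimage by blast
    have "bij_betw (f \<circ> (\<lambda>a. mul a b)) Q R"
      using bij_betw_trans[OF bij_right_mul[OF b(1)] f] .
    then have "bij_betw ((\<lambda>p. mul' p q) \<circ> f) Q R"
      by (rule iffD1[OF bij_betw_cong, rotated]) (simp add: hom b)
    then show "bij_betw (\<lambda>p. mul' p q) R R"
      using bij_betw_comp_iff[OF f] by blast
  next
    fix p q r assume "p \<in> R" "q \<in> R" "r \<in> R"
    then obtain a b c where abc: "a \<in> Q" "b \<in> Q" "c \<in> Q" and "p = f a" "q = f b" "r = f c"
      using preimage by meson
    then show "mul' (mul' p q) r = mul' (mul' p r) (mul' q r)"
      using arg_cong[OF self_distrib[OF abc], of f] by (simp add: hom mul_closed)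
  next
    fix p assume "p \<in> R"
    then obtain a where "a \<in> Q" "p = f a"
      using preimage by blast
    then show "mul' p p = p"
      using arg_cong[OF mul_idem, of a f] by (simp add: hom)
  qed
  have qinv_hom: "qinv R mul' (f a) (f b) = f (qinv Q mul a b)" if "a \<in> Q" "b \<in> Q" for a b
    using that R by (intro R.qinv_eqI) (auto simp: hom[symmetric] qinv_closed mul_qinv)
  show ?thesis
  proof (intro symmetric_quandle.intro symmetric_quandle_axioms.intro R.quandle_axioms)
    fix p q assume "p \<in> R" "q \<in> R"
    then obtain a b where ab: "a \<in> Q" "b \<in> Q" and pq: "p = f a" "q = f b"
      using preimage by meson
    show "rho' p \<in> R"
      using ab unfolding pq R by (simp add: rho_hom[symmetric] rho_closed)
    show "rho' (rho' p) = p"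
      using ab unfolding pq by (simp add: rho_hom[symmetric] rho_closed rho_rho)
    show "rho' (mul' p q) = mul' (rho' p) q"
      using ab unfolding pq by (simp add: rho_hom[symmetric] hom[symmetric] rho_closed mul_closed rho_mul)
    show "mul' p (rho' q) = qinv R mul' p q"
      using ab unfolding pq by (simp add: rho_hom[symmetric] hom[symmetric] rho_closed mul_rho qinv_hom)
  qed
qed

context group
begin

lemma mult_inv_cancel [simp]: "x \<in> carrier G \<Longrightarrow> a \<in> carrier G \<Longrightarrow> x \<otimes> (inv x \<otimes> a) = a"
  by (simp add: m_assoc[symmetric])

lemma inv_mult_cancel [simp]: "x \<in> carrier G \<Longrightarrow> a \<in> carrier G \<Longrightarrow> inv x \<otimes> (x \<otimes> a) = a"
  by (simp add: m_assoc[symmetric])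

lemma core_op_closed: "a \<in> carrier G \<Longrightarrow> b \<in> carrier G \<Longrightarrow> core_op G a b \<in> carrier G"
  by (simp add: core_op_def)

lemma core_op_core_op: "a \<in> carrier G \<Longrightarrow> b \<in> carrier G \<Longrightarrow> core_op G (core_op G a b) b = a"
  by (simp add: core_op_def inv_mult_group m_assoc)

lemma quandle_core: "quandle (carrier G) (core_op G)"
proof
  show "bij_betw (\<lambda>a. core_op G a b) (carrier G) (carrier G)" if "b \<in> carrier G" for b
    by (rule bij_betw_byWitness[where f' = "\<lambda>a. core_op G a b"])
      (use that core_op_closed core_op_core_op in auto)
next
  fix x y z assume "x \<in> carrier G" "y \<in> carrier G" "z \<in> carrier G"
  then show "core_op G (core_op G x y) z = core_op G (core_op G x z) (core_op G y z)"
    by (simp add: core_op_def inv_mult_group m_assoc)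
qed (simp_all add: core_op_def m_assoc)

lemma qinv_core_op: "a \<in> carrier G \<Longrightarrow> b \<in> carrier G \<Longrightarrow> qinv (carrier G) (core_op G) a b = core_op G a b"
  by (simp add: quandle.qinv_eqI[OF quandle_core] core_op_closed core_op_core_op)

lemma symmetric_quandle_core:
  assumes c: "c \<in> carrier G" and central: "\<forall>e\<in>carrier G. c \<otimes> e = e \<otimes> c"
    and cc: "c \<otimes> c = \<one>"
  shows "symmetric_quandle (carrier G) (core_op G) (\<lambda>a. a \<otimes> c)"
proof (intro symmetric_quandle.intro symmetric_quandle_axioms.intro quandle_core)
  fix a b assume ab: "a \<in> carrier G" "b \<in> carrier G"
  have commute: "c \<otimes> (inv a \<otimes> b) = inv a \<otimes> b \<otimes> c"
    using bspec[OF central, of "inv a \<otimes> b"] ab by simp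
  have "core_op G (a \<otimes> c) b = b \<otimes> (c \<otimes> (inv a \<otimes> b))"
    using ab c cc by (simp add: core_op_def inv_mult_group inv_equality m_assoc)
  also have "\<dots> = core_op G a b \<otimes> c"
    using ab c by (simp add: commute core_op_def m_assoc)
  finally show "core_op G a b \<otimes> c = core_op G (a \<otimes> c) b" ..
  have "core_op G a (b \<otimes> c) = b \<otimes> (c \<otimes> (inv a \<otimes> b)) \<otimes> c"
    using ab c by (simp add: core_op_def m_assoc)
  also have "\<dots> = core_op G a b"
    using ab c cc by (simp add: commute core_op_def m_assoc)
  finally show "core_op G a (b \<otimes> c) = qinv (carrier G) (core_op G) a b"
    using ab by (simp add: qinv_core_op)
qed (use c cc in \<open>simp_all add: m_assoc\<close>)

end

lemma (in group_hom) core_op_hom: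
  "a \<in> carrier G \<Longrightarrow> b \<in> carrier G \<Longrightarrow> h (core_op G a b) = core_op H (h a) (h b)"
  by (simp add: core_op_def)

lemma (in group_hom) exists_fibrewise_bij_image_times_kernel:
  assumes surj: "h ` carrier G = carrier H"
    and inj: "inj_on \<iota> K" and ker: "\<iota> ` K = kernel G H h"
  shows "\<exists>f. bij_betw f (carrier G) (carrier H \<times> K) \<and> (\<forall>e\<in>carrier G. fst (f e) = h e)"
proof -
  define \<sigma> where "\<sigma> = inv_into (carrier G) h"
  have \<sigma>: "\<sigma> x \<in> carrier G" "h (\<sigma> x) = x" if "x \<in> carrier H" for x
    unfolding \<sigma>_def using that surj by (auto intro: inv_into_into f_inv_into_f)
  have \<iota>: "\<iota> k \<in> carrier G" "h (\<iota> k) = \<one>\<^bsub>H\<^esub>" if "k \<in> K" for k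
    using that ker unfolding kernel_def by auto
  have fibre: "inv (\<sigma> (h e)) \<otimes> e \<in> \<iota> ` K" if "e \<in> carrier G" for e
    using that \<sigma> ker unfolding kernel_def by simp
  define f where "f e = (h e, the_inv_into K \<iota> (inv (\<sigma> (h e)) \<otimes> e))" for e
  have "bij_betw f (carrier G) (carrier H \<times> K)"
  proof (rule bij_betw_byWitness[where f' = "\<lambda>(x, k). \<sigma> x \<otimes> \<iota> k"])
    show "\<forall>e\<in>carrier G. (\<lambda>(x, k). \<sigma> x \<otimes> \<iota> k) (f e) = e"
      using fibre \<sigma> inj by (simp add: f_def f_the_inv_into_f)
    show "\<forall>p\<in>carrier H \<times> K. f ((\<lambda>(x, k). \<sigma> x \<otimes> \<iota> k) p) = p"
      using \<sigma> \<iota> inj by (auto simp: f_def the_inv_into_f_f)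
    show "f ` carrier G \<subseteq> carrier H \<times> K"
      using fibre inj by (auto simp: f_def intro: the_inv_into_into)
    show "(\<lambda>(x, k). \<sigma> x \<otimes> \<iota> k) ` (carrier H \<times> K) \<subseteq> carrier G"
      using \<sigma> \<iota> by auto
  qed
  then show ?thesis
    unfolding f_def by auto
qed

lemma ext_op_Pair [simp]: "ext_op mul \<alpha> (x, s) (y, t) = (mul x y, \<alpha> x y s t)"
  by (simp add: ext_op_def)

lemma ext_rho_Pair [simp]: "ext_rho rho \<beta> (x, s) = (rho x, \<beta> x s)"
  by (simp add: ext_rho_def)

locale symmetric_quandle_extension =
  base: quandle Y mul +
  ext: symmetric_quandle "Sigma Y S" "ext_op mul \<alpha>" "ext_rho rho \<beta>"
  for Y :: "'x set" and mul :: "'x \<Rightarrow> 'x \<Rightarrow> 'x" and S :: "'x \<Rightarrow> 's set"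
    and \<alpha> :: "'x \<Rightarrow> 'x \<Rightarrow> 's \<Rightarrow> 's \<Rightarrow> 's" and rho :: "'x \<Rightarrow> 'x" and \<beta> :: "'x \<Rightarrow> 's \<Rightarrow> 's"
begin

lemma alpha_closed:
  "x \<in> Y \<Longrightarrow> y \<in> Y \<Longrightarrow> s \<in> S x \<Longrightarrow> t \<in> S y \<Longrightarrow> \<alpha> x y s t \<in> S (mul x y)"
  using ext.mul_closed[of "(x, s)" "(y, t)"] by simp

lemma beta_closed: "x \<in> Y \<Longrightarrow> s \<in> S x \<Longrightarrow> \<beta> x s \<in> S (rho x)"
  using ext.rho_closed[of "(x, s)"] by simp

lemma qinv_ext_op:
  assumes "x \<in> Y" "y \<in> Y" "s \<in> S x" "t \<in> S y"
  obtains u where "u \<in> S (qinv Y mul x y)" "\<alpha> (qinv Y mul x y) y u t = s"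
    and "qinv (Sigma Y S) (ext_op mul \<alpha>) (x, s) (y, t) = (qinv Y mul x y, u)"
proof -
  let ?w = "qinv (Sigma Y S) (ext_op mul \<alpha>) (x, s) (y, t)"
  obtain x' u where w: "?w = (x', u)" "x' \<in> Y" "u \<in> S x'"
    using ext.qinv_closed[of "(x, s)" "(y, t)"] assms by auto
  have "ext_op mul \<alpha> (x', u) (y, t) = (x, s)"
    using ext.mul_qinv[of "(x, s)" "(y, t)"] assms w(1) by simp
  then have "mul x' y = x" "\<alpha> x' y u t = s"
    by simp_all
  moreover from this have "x' = qinv Y mul x y"
    using base.qinv_eqI w(2) assms(2) by simp
  ultimately show ?thesis
    using that w by simp
qed

lemma alpha_bij:
  assumes x: "x \<in> Y" and y: "y \<in> Y" and t: "t \<in> S y"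
  shows "bij_betw (\<lambda>s. \<alpha> x y s t) (S x) (S (mul x y))"
proof (rule bij_betw_imageI)
  show "inj_on (\<lambda>s. \<alpha> x y s t) (S x)"
  proof (rule inj_onI)
    fix s s' assume "s \<in> S x" "s' \<in> S x" "\<alpha> x y s t = \<alpha> x y s' t"
    then show "s = s'"
      using ext.right_cancel[of "(x, s)" "(x, s')" "(y, t)"] x y t by simp
  qed
  show "(\<lambda>s. \<alpha> x y s t) ` S x = S (mul x y)"
  proof
    show "(\<lambda>s. \<alpha> x y s t) ` S x \<subseteq> S (mul x y)"
      using alpha_closed x y t by auto
    show "S (mul x y) \<subseteq> (\<lambda>s. \<alpha> x y s t) ` S x"
    proof
      fix v assume v: "v \<in> S (mul x y)"
      have "qinv Y mul (mul x y) y = x"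
        using base.qinv_eqI x y by simp
      then show "v \<in> (\<lambda>s. \<alpha> x y s t) ` S x"
        using qinv_ext_op[OF base.mul_closed[OF x y] y v t] by (metis image_eqI)
    qed
  qed
qed

lemma dyn_cocycle: "dyn_cocycle Y mul rho S \<alpha> \<beta>"
  unfolding dyn_cocycle_def
proof (intro conjI ballI)
  fix x y s t assume xy: "x \<in> Y" "y \<in> Y" and st: "s \<in> S x" "t \<in> S y"
  let ?x' = "qinv Y mul x y"
  obtain u where u: "u \<in> S ?x'" "\<alpha> ?x' y u t = s"
    and qinv_eq: "qinv (Sigma Y S) (ext_op mul \<alpha>) (x, s) (y, t) = (?x', u)"
    using qinv_ext_op xy st .
  have "\<alpha> x (rho y) s (\<beta> y t) = u"
    using ext.mul_rho[of "(x, s)" "(y, t)"] xy st qinv_eq by simp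
  moreover have "the_inv_into (S ?x') (\<lambda>u. \<alpha> ?x' y u t) s = u"
    using alpha_bij[OF base.qinv_closed[OF xy] xy(2) st(2)] u
    by (simp add: bij_betw_def the_inv_into_f_eq)
  ultimately show "\<alpha> x (rho y) s (\<beta> y t) = the_inv_into (S ?x') (\<lambda>u. \<alpha> ?x' y u t) s"
    by simp
  show "\<alpha> (rho x) y (\<beta> x s) t = \<beta> (mul x y) (\<alpha> x y s t)"
    using ext.rho_mul[of "(x, s)" "(y, t)"] xy st by simp
next
  fix x y z s t w assume "x \<in> Y" "y \<in> Y" "z \<in> Y" "s \<in> S x" "t \<in> S y" "w \<in> S z"
  then show "\<alpha> (mul x y) z (\<alpha> x y s t) w = \<alpha> (mul x z) (mul y z) (\<alpha> x z s w) (\<alpha> y z t w)"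
    using ext.self_distrib[of "(x, s)" "(y, t)" "(z, w)"] by simp
next
  fix x s assume "x \<in> Y" "s \<in> S x"
  then show "\<beta> (rho x) (\<beta> x s) = s" "\<alpha> x x s s = s"
    using ext.rho_rho[of "(x, s)"] ext.mul_idem[of "(x, s)"] by simp_all
qed (simp_all add: alpha_closed beta_closed alpha_bij)

end

lemma sq_iso_extension_of_fibration:
  assumes f: "bij_betw f Q (Sigma Y S)"
    and mul: "\<And>a b. a \<in> Q \<Longrightarrow> b \<in> Q \<Longrightarrow> fst (f (mul a b)) = mul' (fst (f a)) (fst (f b))"
    and rho: "\<And>a. a \<in> Q \<Longrightarrow> fst (f (rho a)) = rho' (fst (f a))"
  shows "\<exists>\<alpha> \<beta>. sq_iso Q mul rho (Sigma Y S) (ext_op mul' \<alpha>) (ext_rho rho' \<beta>) f"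
proof -
  define g where "g = inv_into Q f"
  define \<alpha> where "\<alpha> x y s t = snd (f (mul (g (x, s)) (g (y, t))))" for x y s t
  define \<beta> where "\<beta> x s = snd (f (rho (g (x, s))))" for x s
  have g_f: "g (f a) = a" if "a \<in> Q" for a
    unfolding g_def using f that by (rule bij_betw_inv_into_left)
  have "sq_iso Q mul rho (Sigma Y S) (ext_op mul' \<alpha>) (ext_rho rho' \<beta>) f"
    unfolding sq_iso_def
  proof (intro conjI ballI f)
    show "f (mul a b) = ext_op mul' \<alpha> (f a) (f b)" if "a \<in> Q" "b \<in> Q" for a b
      using mul[OF that] g_f that by (simp add: ext_op_def \<alpha>_def prod_eq_iff)
    show "f (rho a) = ext_rho rho' \<beta> (f a)" if "a \<in> Q" for a
      using rho[OF that] g_f that by (simp add: ext_rho_def \<beta>_def prod_eq_iff)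
  qed
  then show ?thesis
    by blast
qed

theorem corollary5p3:
  fixes A :: "('a, 'ma) monoid_scheme" and E :: "('e, 'me) monoid_scheme"
    and G :: "('g, 'mg) monoid_scheme"
    and \<iota> :: "'a \<Rightarrow> 'e" and \<pi> :: "'e \<Rightarrow> 'g" and z :: 'a
  assumes "group A" and "group E" and "group G"
    and "\<iota> \<in> hom A E" and "inj_on \<iota> (carrier A)"
    and "\<pi> \<in> hom E G" and "\<pi> ` carrier E = carrier G"
    and "\<iota> ` carrier A = kernel E G \<pi>"
    and "z \<in> carrier A"
    and "\<forall>e\<in>carrier E. \<iota> z \<otimes>\<^bsub>E\<^esub> e = e \<otimes>\<^bsub>E\<^esub> \<iota> z"
    and "z \<otimes>\<^bsub>A\<^esub> z = \<one>\<^bsub>A\<^esub>"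
  shows "\<exists>\<alpha> \<beta>.
    dyn_cocycle (carrier G) (core_op G) (\<lambda>y. y \<otimes>\<^bsub>G\<^esub> \<pi> (\<iota> z)) (\<lambda>_. carrier A) \<alpha> \<beta> \<and>
    (\<exists>f. sq_iso (carrier E) (core_op E) (\<lambda>y. y \<otimes>\<^bsub>E\<^esub> \<iota> z)
               (Sigma (carrier G) (\<lambda>_. carrier A))
               (ext_op (core_op G) \<alpha>) (ext_rho (\<lambda>y. y \<otimes>\<^bsub>G\<^esub> \<pi> (\<iota> z)) \<beta>) f)"
proof -
  interpret E: group E by fact
  interpret G: group G by fact
  interpret \<iota>: group_hom A E \<iota>
    using assms by (simp add: group_hom_def group_hom_axioms_def)
  interpret \<pi>: group_hom E G \<pi>
    using assms by (simp add: group_hom_def group_hom_axioms_def)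
  have z: "\<iota> z \<in> carrier E" "\<iota> z \<otimes>\<^bsub>E\<^esub> \<iota> z = \<one>\<^bsub>E\<^esub>"
    using assms(9,11) \<iota>.hom_mult[of z z] by simp_all
  obtain f where f: "bij_betw f (carrier E) (carrier G \<times> carrier A)"
    and fst_f: "\<forall>e\<in>carrier E. fst (f e) = \<pi> e"
    using \<pi>.exists_fibrewise_bij_image_times_kernel assms(5,7,8) by blast
  have "\<exists>\<alpha> \<beta>. sq_iso (carrier E) (core_op E) (\<lambda>y. y \<otimes>\<^bsub>E\<^esub> \<iota> z) (carrier G \<times> carrier A)
      (ext_op (core_op G) \<alpha>) (ext_rho (\<lambda>y. y \<otimes>\<^bsub>G\<^esub> \<pi> (\<iota> z)) \<beta>) f"
  proof (rule sq_iso_extension_of_fibration[OF f])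
    show "fst (f (core_op E a b)) = core_op G (fst (f a)) (fst (f b))"
      if "a \<in> carrier E" "b \<in> carrier E" for a b
      using that fst_f by (simp add: E.core_op_closed \<pi>.core_op_hom)
    show "fst (f (a \<otimes>\<^bsub>E\<^esub> \<iota> z)) = fst (f a) \<otimes>\<^bsub>G\<^esub> \<pi> (\<iota> z)" if "a \<in> carrier E" for a
      using that fst_f z(1) by simp
  qed
  then obtain \<alpha> \<beta> where iso: "sq_iso (carrier E) (core_op E) (\<lambda>y. y \<otimes>\<^bsub>E\<^esub> \<iota> z)
      (carrier G \<times> carrier A) (ext_op (core_op G) \<alpha>) (ext_rho (\<lambda>y. y \<otimes>\<^bsub>G\<^esub> \<pi> (\<iota> z)) \<beta>) f"
    by blast
  have "symmetric_quandle (carrier G \<times> carrier A)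
      (ext_op (core_op G) \<alpha>) (ext_rho (\<lambda>y. y \<otimes>\<^bsub>G\<^esub> \<pi> (\<iota> z)) \<beta>)"
    using symmetric_quandle.sq_iso_image[OF E.symmetric_quandle_core[OF z(1) assms(10) z(2)] iso] .
  then have "dyn_cocycle (carrier G) (core_op G) (\<lambda>y. y \<otimes>\<^bsub>G\<^esub> \<pi> (\<iota> z)) (\<lambda>_. carrier A) \<alpha> \<beta>"
    using G.quandle_core
    by (intro symmetric_quandle_extension.dyn_cocycle) (simp add: symmetric_quandle_extension_def)
  with iso show ?thesis
    by blast
qed

end
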